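(* Let $N\ge1$ be an integer, let $0<\sigma_0^2<\sigma_1^2$, and let $\alpha,\beta\in(0.5,1)$. Define $\eta_0:=\Gamma^{-1}\!\left(\tfrac N2,(1-\alpha)\Gamma(\tfrac N2)\right)\sigma_0^2$ and the Rao-test thresholds $\eta_1^R=(N-\sqrt{2N\lambda_1^R})\sigma_1^2$, $\eta_2^R=(N+\sqrt{2N\lambda_1^R})\sigma_1^2$, where $\lambda_1^R>0$ is chosen so that $$\frac{\Gamma(\frac N2,\frac{\eta_1^R}{\sigma_1^2})-\Gamma(\frac N2,\frac{\eta_2^R}{\sigma_1^2})}{\Gamma(\frac N2)}=\beta .$$ Let $\eta_1^r:=\Gamma^{-1}\!\left(\tfrac N2,(1-\alpha)\Gamma(\tfrac N2)\right)\sigma_0^2$ and $\eta_2^r:=2N\sigma_1^2-\eta_1^r$. If $$\beta>\frac{\Gamma(\frac N2,\frac{\eta_1^r}{\sigma_1^2})}{\Gamma(\frac N2)}-\frac{\Gamma(\frac N2,\frac{\eta_2^r}{\sigma_1^2})}{\Gamma(\frac N2)},$$ then the decision regions $\mathcal{R}_0=\{Y<\eta_0\}$ and $\mathcal{R}_1=\{\eta_1^R<Y<\eta_2^R\}$ overlap, i.e., $\eta_1^R<\eta_0$.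
   Context: Observations $y_0,\dots,y_{N-1}$ are i.i.d. $\mathcal{N}(0,\sigma^2)$; the test statistic is $Y=\sum_{n=0}^{N-1}y_n^2$. Hypotheses: $\mathcal{H}_0:\sigma^2=\sigma_0^2$, $\mathcal{H}_1:\sigma^2=\sigma_1^2$, $\mathcal{H}_2:\sigma^2\in(\sigma_0^2,\sigma_1^2)\cup(\sigma_1^2,\infty)$. $\Gamma(a)$ is the Gamma function, $\Gamma(a,x)=\int_x^\infty t^{a-1}e^{-t}dt$ the upper incomplete Gamma function, and $\Gamma^{-1}(a,\cdot)$ the inverse of $x\mapsto\Gamma(a,x)$. The Rao test statistic is $T_R=\frac{(Y-N\sigma_1^2)^2}{2N\sigma_1^4}$, declaring $\mathcal{H}_1$ when $T_R<\lambda_1^R$, i.e., when $\eta_1^R<Y<\eta_2^R$. The detection subproblem declares $\mathcal{H}_0$ on $\{Y<\eta_0\}$; "overlapping" means $\mathcal{R}_0\cap\mathcal{R}_1\ne\emptyset$, i.e., $\eta_1^R<\eta_0$. *)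

theory Defs
  imports "HOL-Analysis.Analysis"
begin

text \<open>For x < 0 the integrand is taken to vanish on the negative axis, so that
  Gamma(a,x) = Gamma(a) there (the chi-square tail probability convention).\<close>
definition upper_inc_Gamma :: "real \<Rightarrow> real \<Rightarrow> real" where
  "upper_inc_Gamma a x = integral {max 0 x..} (\<lambda>t. t powr (a - 1) * exp (- t))"

definition inv_upper_inc_Gamma :: "real \<Rightarrow> real \<Rightarrow> real" where
  "inv_upper_inc_Gamma a y = (THE x. 0 \<le> x \<and> upper_inc_Gamma a x = y)"

end

theory Submission
  imports Defs
begin

text \<open>Both acceptance intervals are symmetric about \<open>N \<sigma>\<^sub>1\<^sup>2\<close>: the Rao interval
  \<open>(\<eta>\<^sub>1\<^sup>R, \<eta>\<^sub>2\<^sup>R)\<close> and \<open>(\<eta>\<^sub>1\<^sup>r, 2N\<sigma>\<^sub>1\<^sup>2 - \<eta>\<^sub>1\<^sup>r)\<close>, where \<open>\<eta>\<^sub>1\<^sup>r = \<eta>\<^sub>0\<close>.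
  If \<open>\<eta>\<^sub>1\<^sup>R \<ge> \<eta>\<^sub>0\<close>, the Rao interval is nested in the other one, so its
  \<open>\<H>\<^sub>1\<close>-probability \<open>\<beta>\<close> is at most that of the other interval, contradicting the
  hypothesis on \<open>\<beta>\<close>. Only monotonicity of \<open>\<Gamma>(a,\<cdot>)\<close> is needed.\<close>

lemma Gamma_integrand_integrable_atLeast:
  fixes a c :: real
  assumes "a > 0" and "c \<ge> 0"
  shows "(\<lambda>t. t powr (a - 1) * exp (- t)) integrable_on {c..}"
proof -
  let ?f = "\<lambda>t::real. t powr (a - 1) * exp (- t)"
  have "?f integrable_on {0..}"
    using Gamma_integral_real[OF \<open>a > 0\<close>] has_integral_integrable
    by (simp add: exp_minus field_simps)
  then have "?f absolutely_integrable_on {0..}"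
    by (simp add: nonnegative_absolutely_integrable_1)
  then have "?f absolutely_integrable_on {c..}"
    by (rule set_integrable_subset) (use \<open>c \<ge> 0\<close> in auto)
  then show ?thesis
    using set_lebesgue_integral_eq_integral(1) by blast
qed

lemma upper_inc_Gamma_antimono:
  fixes a x y :: real
  assumes "a > 0" and "x \<le> y"
  shows "upper_inc_Gamma a y \<le> upper_inc_Gamma a x"
  unfolding upper_inc_Gamma_def
  by (rule integral_subset_le)
     (use assms Gamma_integrand_integrable_atLeast in auto)

lemma upper_inc_Gamma_diff_mono:
  fixes a x x' y y' :: real
  assumes "a > 0" and "x \<le> x'" and "y' \<le> y"
  shows "upper_inc_Gamma a x' - upper_inc_Gamma a y' \<le> upper_inc_Gamma a x - upper_inc_Gamma a y"
  using upper_inc_Gamma_antimono[OF \<open>a > 0\<close> \<open>x \<le> x'\<close>]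
        upper_inc_Gamma_antimono[OF \<open>a > 0\<close> \<open>y' \<le> y\<close>] by linarith

theorem theorem2:
  fixes N :: nat and s0 s1 \<alpha> \<beta> lam1R \<eta>0 \<eta>1R \<eta>2R \<eta>1r \<eta>2r :: real
  assumes "N \<ge> 1"
    and "0 < s0" and "s0 < s1"
    and "0.5 < \<alpha>" and "\<alpha> < 1" and "0.5 < \<beta>" and "\<beta> < 1"
    and "\<eta>0 = inv_upper_inc_Gamma (real N / 2) ((1 - \<alpha>) * Gamma (real N / 2)) * s0"
    and "lam1R > 0"
    and "\<eta>1R = (real N - sqrt (2 * real N * lam1R)) * s1"
    and "\<eta>2R = (real N + sqrt (2 * real N * lam1R)) * s1"
    and "(upper_inc_Gamma (real N / 2) (\<eta>1R / s1) - upper_inc_Gamma (real N / 2) (\<eta>2R / s1))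
           / Gamma (real N / 2) = \<beta>"
    and "\<eta>1r = inv_upper_inc_Gamma (real N / 2) ((1 - \<alpha>) * Gamma (real N / 2)) * s0"
    and "\<eta>2r = 2 * real N * s1 - \<eta>1r"
    and "\<beta> > upper_inc_Gamma (real N / 2) (\<eta>1r / s1) / Gamma (real N / 2)
              - upper_inc_Gamma (real N / 2) (\<eta>2r / s1) / Gamma (real N / 2)"
  shows "\<eta>1R < \<eta>0"
proof (rule ccontr)
  assume "\<not> \<eta>1R < \<eta>0"
  let ?G = "upper_inc_Gamma (real N / 2)"
  have "s1 > 0" and "real N / 2 > 0" and "Gamma (real N / 2) > 0"
    using assms by (auto simp: Gamma_real_pos)
  have "\<eta>1r \<le> \<eta>1R"
    using \<open>\<not> \<eta>1R < \<eta>0\<close> assms(8,13) by simp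
  moreover have "\<eta>1R + \<eta>2R = \<eta>1r + \<eta>2r"
    using assms(10,11,14) by (simp add: algebra_simps)
  ultimately have "\<eta>1r / s1 \<le> \<eta>1R / s1" and "\<eta>2R / s1 \<le> \<eta>2r / s1"
    using \<open>s1 > 0\<close> by (auto intro: divide_right_mono)
  then have "?G (\<eta>1R / s1) - ?G (\<eta>2R / s1) \<le> ?G (\<eta>1r / s1) - ?G (\<eta>2r / s1)"
    using upper_inc_Gamma_diff_mono \<open>real N / 2 > 0\<close> by blast
  then have "\<beta> \<le> (?G (\<eta>1r / s1) - ?G (\<eta>2r / s1)) / Gamma (real N / 2)"
    using assms(12) \<open>Gamma (real N / 2) > 0\<close> by (metis divide_right_mono less_imp_le)
  then show False
    using assms(15) by (simp add: diff_divide_distrib)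
qed

end
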